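(* Let $\mathcal L$ be a finite distributive lattice, $\mathcal I$ a poset ideal and $\mathcal J$ a poset coideal of $\mathcal L$ such that $\mathcal I\cup\mathcal J=\mathcal L$. Then $H_{\mathcal I\cap\mathcal J}=H_{\mathcal I}\cap H_{\mathcal J}$ if and only if for each pair $p,q\in\mathcal L$ such that $q$ is a lower neighbor of $p$, either $p\in\mathcal I$ or $q\in\mathcal J$.
   Context: Let $P$ be the set of join-irreducible elements of $\mathcal L$ (elements with exactly one lower neighbor), with the induced order; for $p\in\mathcal L$ put $\ell(p)=\{q\in P:q\le p\}$. Let $K$ be a field and $S=K[x_p,y_p: p\in P]$ with all variables of degree 1. For $q\in\mathcal L$ put $u_q=\prod_{p\in\ell(q)}x_p\prod_{p\in P\setminus\ell(q)}y_p$, and for a subset $\mathcal S\subseteq\mathcal L$ let $H_{\mathcal S}$ be the ideal of $S$ generated by $\{u_q:q\in\mathcal S\}$ (the zero ideal if $\mathcal S=\emptyset$). $q$ is a lower neighbor of $p$ if $q<p$ and no element lies strictly between them. A poset ideal $\mathcal I$ satisfies: $\alpha\in\mathcal I,\ \beta<\alpha\Rightarrow\beta\in\mathcal I$; a poset coideal satisfies: $\alpha\in\mathcal J,\ \beta>\alpha\Rightarrow\beta\in\mathcal J$. *)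

theory Defs
  imports Main "HOL-Library.Poly_Mapping"
begin

definition lower_neighbor :: "'a::order \<Rightarrow> 'a \<Rightarrow> bool" where
  "lower_neighbor q p \<longleftrightarrow> q < p \<and> \<not> (\<exists>r. q < r \<and> r < p)"

definition join_irreducibles :: "'a::order set" where
  "join_irreducibles = {p. card {q. lower_neighbor q p} = 1}"

definition lower_set :: "'a::order \<Rightarrow> 'a set" where
  "lower_set p = {q \<in> join_irreducibles. q \<le> p}"

definition poset_ideal :: "'a::order set \<Rightarrow> bool" where
  "poset_ideal I \<longleftrightarrow> (\<forall>a \<in> I. \<forall>b. b < a \<longrightarrow> b \<in> I)"

definition poset_coideal :: "'a::order set \<Rightarrow> bool" where
  "poset_coideal J \<longleftrightarrow> (\<forall>a \<in> J. \<forall>b. b > a \<longrightarrow> b \<in> J)"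

text \<open>Polynomials over K in variables indexed by 'a \<times> bool:
  (p, True) is x_p and (p, False) is y_p.\<close>

type_synonym ('a, 'k) mpoly = "(('a \<times> bool) \<Rightarrow>\<^sub>0 nat) \<Rightarrow>\<^sub>0 'k"

definition var :: "'a \<times> bool \<Rightarrow> ('a, 'k::comm_ring_1) mpoly" where
  "var v = Poly_Mapping.single (Poly_Mapping.single v 1) 1"

definition ring_S :: "('a::order, 'k::comm_ring_1) mpoly set" where
  "ring_S = {f. \<forall>m \<in> Poly_Mapping.keys f. \<forall>v \<in> Poly_Mapping.keys m. fst v \<in> join_irreducibles}"

definition u_mon :: "'a::order \<Rightarrow> ('a, 'k::comm_ring_1) mpoly" where
  "u_mon q = (\<Prod>p\<in>lower_set q. var (p, True)) *
             (\<Prod>p\<in>join_irreducibles - lower_set q. var (p, False))"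

definition gen_ideal :: "'r::comm_ring_1 set \<Rightarrow> 'r set \<Rightarrow> 'r set" where
  "gen_ideal R G = {(\<Sum>g\<in>G. c g * g) | c. \<forall>g\<in>G. c g \<in> R}"

definition H_ideal :: "'a::order set \<Rightarrow> ('a, 'k::comm_ring_1) mpoly set" where
  "H_ideal A = gen_ideal ring_S (u_mon ` A)"

end

theory Submission
  imports Defs
begin

(* H_A is the monomial ideal generated by the u_a, so a polynomial of S lies in H_A iff each
   of its monomials is divisible by some u_a.  The exponent of u_c records, for every
   join-irreducible p, whether p <= c; since join-irreducibles of a distributive lattice are
   join-prime, u_c divides u_a u_b (equivalently lcm(u_a, u_b)) iff inf a b <= c <= sup a b.
   Hence H_I \<inter> H_J = H_(I \<inter> J) iff every interval [inf a b, sup a b] with a \<in> I, b \<in> J meets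
   I \<inter> J.  A cover q < p with q \<in> I - J and p \<in> J - I gives the interval {q, p}, which misses
   I \<inter> J; conversely, without such covers a maximal element of I in the interval lies in J. *)

section \<open>Join-irreducible elements of a finite lattice\<close>

lemma ex_lower_neighbor_le:
  fixes x y :: "'a::{finite,order}"
  assumes "x < y"
  obtains w where "lower_neighbor x w" "w \<le> y"
proof -
  have "\<exists>m\<in>{w. x < w \<and> w \<le> y}. \<forall>b\<in>{w. x < w \<and> w \<le> y}. b \<le> m \<longrightarrow> m = b"
    using assms by (intro finite_has_minimal) auto
  then obtain m where m: "x < m" "m \<le> y" and min: "\<And>b. x < b \<Longrightarrow> b \<le> m \<Longrightarrow> b = m"
    by fastforce
  have "lower_neighbor x m"
    unfolding lower_neighbor_def using m min by (metis less_le)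
  then show thesis using m(2) by (rule that)
qed

lemma ex_lower_neighbor_ge:
  fixes x y :: "'a::{finite,order}"
  assumes "x < y"
  obtains w where "lower_neighbor w y" "x \<le> w"
proof -
  have "\<exists>m\<in>{w. x \<le> w \<and> w < y}. \<forall>b\<in>{w. x \<le> w \<and> w < y}. m \<le> b \<longrightarrow> m = b"
    using assms by (intro finite_has_maximal) auto
  then obtain m where m: "x \<le> m" "m < y" and max: "\<And>b. m \<le> b \<Longrightarrow> b < y \<Longrightarrow> b = m"
    by fastforce
  have "lower_neighbor m y"
    unfolding lower_neighbor_def using m max by (metis less_le)
  then show thesis using m(1) by (rule that)
qed

lemma join_irreducibles_iff:
  fixes p :: "'a::{finite,order}"
  shows "p \<in> join_irreducibles \<longleftrightarrow> (\<exists>w<p. \<forall>x<p. x \<le> w)"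
proof
  assume "p \<in> join_irreducibles"
  then have "card {q. lower_neighbor q p} = 1" unfolding join_irreducibles_def by simp
  then obtain w where w: "{q. lower_neighbor q p} = {w}" by (rule card_1_singletonE)
  have "x \<le> w" if "x < p" for x
  proof -
    obtain v where "lower_neighbor v p" "x \<le> v" using \<open>x < p\<close> by (rule ex_lower_neighbor_ge)
    then have "v \<in> {q. lower_neighbor q p}" by simp
    with w \<open>x \<le> v\<close> show ?thesis by simp
  qed
  moreover have "w < p" using w unfolding lower_neighbor_def by blast
  ultimately show "\<exists>w<p. \<forall>x<p. x \<le> w" by blast
next
  assume "\<exists>w<p. \<forall>x<p. x \<le> w"
  then obtain w where "w < p" and below: "\<And>x. x < p \<Longrightarrow> x \<le> w" by blast
  then have "lower_neighbor q p \<longleftrightarrow> q = w" for q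
    unfolding lower_neighbor_def by (metis leD order.order_iff_strict)
  then show "p \<in> join_irreducibles" unfolding join_irreducibles_def by simp
qed

(* A minimal z <= x with z not below y is join-irreducible: inf z y is its only lower cover. *)
lemma le_if_join_irreducibles_le:
  fixes x y :: "'a::{finite,lattice}"
  assumes "\<And>r. r \<in> join_irreducibles \<Longrightarrow> r \<le> x \<Longrightarrow> r \<le> y"
  shows "x \<le> y"
proof (rule ccontr)
  assume "\<not> x \<le> y"
  then have "\<exists>z\<in>{z. z \<le> x \<and> \<not> z \<le> y}. \<forall>w\<in>{z. z \<le> x \<and> \<not> z \<le> y}. w \<le> z \<longrightarrow> z = w"
    by (intro finite_has_minimal) auto
  then obtain z where z: "z \<le> x" "\<not> z \<le> y"
    and min: "\<And>w. w \<le> x \<Longrightarrow> \<not> w \<le> y \<Longrightarrow> w \<le> z \<Longrightarrow> w = z"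
    by fastforce
  have "inf z y < z" using z(2) by (simp add: less_le_not_le)
  moreover have "w \<le> inf z y" if "w < z" for w
    using that z(1) min by (metis inf.bounded_iff less_imp_le order.trans order_less_irrefl)
  ultimately have "z \<in> join_irreducibles"
    unfolding join_irreducibles_iff by blast
  with assms z show False by blast
qed

lemma join_irreducible_le_supD:
  fixes p a b :: "'a::{finite,distrib_lattice}"
  assumes "p \<in> join_irreducibles" and "p \<le> sup a b"
  shows "p \<le> a \<or> p \<le> b"
proof (rule ccontr)
  assume "\<not> (p \<le> a \<or> p \<le> b)"
  then have "inf p a < p" "inf p b < p" by (simp_all add: less_le_not_le)
  obtain w where "w < p" and below: "\<And>x. x < p \<Longrightarrow> x \<le> w"
    using assms(1) unfolding join_irreducibles_iff by blast
  have "p = sup (inf p a) (inf p b)"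
    using assms(2) by (simp add: inf.absorb1 flip: inf_sup_distrib1)
  also have "\<dots> \<le> w" using below \<open>inf p a < p\<close> \<open>inf p b < p\<close> by simp
  finally show False using \<open>w < p\<close> by simp
qed

lemma poset_ideal_le:
  "poset_ideal I \<Longrightarrow> a \<in> I \<Longrightarrow> b \<le> a \<Longrightarrow> b \<in> I"
  unfolding poset_ideal_def by (metis order.order_iff_strict)

lemma poset_coideal_ge:
  "poset_coideal J \<Longrightarrow> a \<in> J \<Longrightarrow> a \<le> b \<Longrightarrow> b \<in> J"
  unfolding poset_coideal_def by (metis order.order_iff_strict)

lemma ex_between_in_ideal_coideal:
  fixes I J :: "'a::{finite,lattice} set"
  assumes "poset_ideal I" and "poset_coideal J"
    and cover: "\<And>p q. lower_neighbor q p \<Longrightarrow> p \<in> I \<or> q \<in> J"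
    and "a \<in> I" and "b \<in> J"
  obtains c where "c \<in> I \<inter> J" "inf a b \<le> c" "c \<le> sup a b"
proof -
  let ?S = "{c \<in> I. inf a b \<le> c \<and> c \<le> sup a b}"
  have "inf a b \<in> ?S"
    using poset_ideal_le[OF assms(1,4)] by (simp add: le_supI1)
  then have "\<exists>c\<in>?S. \<forall>x\<in>?S. c \<le> x \<longrightarrow> c = x"
    by (intro finite_has_maximal) auto
  then obtain c where "c \<in> I" "inf a b \<le> c" "c \<le> sup a b"
    and max: "\<And>x. x \<in> ?S \<Longrightarrow> c \<le> x \<Longrightarrow> c = x"
    by blast
  have "c \<in> J"
  proof (rule ccontr)
    assume "c \<notin> J"
    moreover have "sup a b \<in> J" using poset_coideal_ge[OF assms(2,5)] by simp
    ultimately have "c < sup a b" using \<open>c \<le> sup a b\<close> by (metis order.not_eq_order_implies_strict)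
    then obtain w where w: "lower_neighbor c w" "w \<le> sup a b" by (rule ex_lower_neighbor_le)
    have "c < w" using w(1) unfolding lower_neighbor_def by simp
    have "w \<in> I" using cover[OF w(1)] \<open>c \<notin> J\<close> by simp
    then have "w \<in> ?S" using \<open>inf a b \<le> c\<close> \<open>c < w\<close> w(2) by simp
    with max \<open>c < w\<close> show False by fastforce
  qed
  then show thesis using \<open>c \<in> I\<close> \<open>inf a b \<le> c\<close> \<open>c \<le> sup a b\<close> by (intro that) simp_all
qed

section \<open>Ideals generated by monomials\<close>

lemma sum_closed:
  assumes "0 \<in> R" and "\<And>a b. a \<in> R \<Longrightarrow> b \<in> R \<Longrightarrow> a + b \<in> R"
    and "\<And>x. x \<in> A \<Longrightarrow> f x \<in> R"
  shows "sum f A \<in> R"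
  using assms(3) by (induction A rule: infinite_finite_induct) (simp_all add: assms(1,2))

lemma zero_mem_gen_ideal: "0 \<in> R \<Longrightarrow> 0 \<in> gen_ideal R G"
  unfolding gen_ideal_def by (auto intro!: exI[of _ "\<lambda>_. 0"])

lemma add_mem_gen_ideal:
  assumes "\<And>a b. a \<in> R \<Longrightarrow> b \<in> R \<Longrightarrow> a + b \<in> R"
    and "f \<in> gen_ideal R G" and "g \<in> gen_ideal R G"
  shows "f + g \<in> gen_ideal R G"
proof -
  obtain c d where "f = (\<Sum>h\<in>G. c h * h)" "g = (\<Sum>h\<in>G. d h * h)"
    and "\<forall>h\<in>G. c h \<in> R" "\<forall>h\<in>G. d h \<in> R"
    using assms(2,3) unfolding gen_ideal_def by blast
  then have "f + g = (\<Sum>h\<in>G. (c h + d h) * h) \<and> (\<forall>h\<in>G. c h + d h \<in> R)"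
    by (simp add: assms(1) sum.distrib distrib_right)
  then show ?thesis unfolding gen_ideal_def mem_Collect_eq by (rule exI[of _ "\<lambda>h. c h + d h"])
qed

lemma mult_mem_gen_ideal:
  assumes "finite G" and "0 \<in> R" and "c \<in> R" and "g \<in> G"
  shows "c * g \<in> gen_ideal R G"
proof -
  let ?c = "\<lambda>h. if h = g then c else 0"
  have "c * g = (\<Sum>h\<in>G. ?c h * h) \<and> (\<forall>h\<in>G. ?c h \<in> R)"
    using assms by (simp add: if_distrib[of "\<lambda>x. x * _"] cong: if_cong)
  then show ?thesis unfolding gen_ideal_def mem_Collect_eq by (rule exI[of _ ?c])
qed

lemma gen_ideal_subset:
  assumes "0 \<in> R" and "\<And>a b. a \<in> R \<Longrightarrow> b \<in> R \<Longrightarrow> a + b \<in> R"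
    and "\<And>a b. a \<in> R \<Longrightarrow> b \<in> R \<Longrightarrow> a * b \<in> R" and "G \<subseteq> R"
  shows "gen_ideal R G \<subseteq> R"
  unfolding gen_ideal_def using assms by (auto intro!: sum_closed)

lemma zero_mem_ring_S: "0 \<in> ring_S"
  unfolding ring_S_def by simp

lemma add_mem_ring_S:
  assumes "f \<in> ring_S" and "g \<in> ring_S"
  shows "f + g \<in> ring_S"
  unfolding ring_S_def
proof (intro CollectI ballI)
  fix m v
  assume m: "m \<in> Poly_Mapping.keys (f + g)" and v: "v \<in> Poly_Mapping.keys m"
  from m have "m \<in> Poly_Mapping.keys f \<union> Poly_Mapping.keys g"
    by (rule subsetD[OF keys_add])
  with v assms show "fst v \<in> join_irreducibles"
    unfolding ring_S_def by blast
qed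

lemma mult_mem_ring_S:
  assumes "f \<in> ring_S" and "g \<in> ring_S"
  shows "f * g \<in> ring_S"
  unfolding ring_S_def
proof (intro CollectI ballI)
  fix m v
  assume "m \<in> Poly_Mapping.keys (f * g)" and v: "v \<in> Poly_Mapping.keys m"
  then obtain a b where "a \<in> Poly_Mapping.keys f" "b \<in> Poly_Mapping.keys g" "m = a + b"
    using keys_mult by blast
  with v keys_add[of a b] assms show "fst v \<in> join_irreducibles"
    unfolding ring_S_def by blast
qed

lemma single_mem_ring_S:
  "(\<And>v. v \<in> Poly_Mapping.keys m \<Longrightarrow> fst v \<in> join_irreducibles) \<Longrightarrow> Poly_Mapping.single m c \<in> ring_S"
  unfolding ring_S_def by simp

lemma sum_single_lookup_keys:
  "(\<Sum>m\<in>Poly_Mapping.keys f. Poly_Mapping.single m (Poly_Mapping.lookup f m)) = f"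
  by (rule poly_mapping_eqI)
    (simp add: lookup_sum lookup_single when_def in_keys_iff sum.delta)

(* Divisibility of monomials is the pointwise order of the exponent functions. *)
lemma single_eq_single_diff_mult:
  fixes m t :: "'v \<Rightarrow>\<^sub>0 nat"
  assumes "Poly_Mapping.lookup t \<le> Poly_Mapping.lookup m"
  shows "Poly_Mapping.single m c = Poly_Mapping.single (m - t) c * Poly_Mapping.single t (1::'k::semiring_1)"
proof -
  have "m - t + t = m"
    using assms by (intro poly_mapping_eqI) (simp add: lookup_add lookup_minus le_fun_def)
  then show ?thesis by (simp add: mult_single)
qed

lemma divisor_of_keys_gen_ideal_monomials:
  fixes f :: "('v \<Rightarrow>\<^sub>0 nat) \<Rightarrow>\<^sub>0 'k::comm_ring_1"
  assumes "f \<in> gen_ideal R ((\<lambda>t. Poly_Mapping.single t 1) ` T)" and "m \<in> Poly_Mapping.keys f"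
  shows "\<exists>t\<in>T. Poly_Mapping.lookup t \<le> Poly_Mapping.lookup m"
proof -
  let ?G = "(\<lambda>t. Poly_Mapping.single t 1) ` T"
  obtain c where "f = (\<Sum>h\<in>?G. c h * h)"
    using assms(1) unfolding gen_ideal_def mem_Collect_eq by (elim exE conjE) simp
  with assms(2) have "m \<in> Poly_Mapping.keys (\<Sum>h\<in>?G. c h * h)" by simp
  then have "m \<in> (\<Union>h\<in>?G. Poly_Mapping.keys (c h * h))" by (rule subsetD[OF keys_sum])
  then obtain h where "h \<in> ?G" and m: "m \<in> Poly_Mapping.keys (c h * h)" by (rule UN_E)
  from \<open>h \<in> ?G\<close> obtain t where "t \<in> T" and h: "h = Poly_Mapping.single t 1" by (rule imageE)
  have "m \<in> {a + b |a b. a \<in> Poly_Mapping.keys (c h) \<and> b \<in> Poly_Mapping.keys h}"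
    using m by (rule subsetD[OF keys_mult])
  then obtain a where "m = a + t" by (auto simp: h)
  then have "Poly_Mapping.lookup t \<le> Poly_Mapping.lookup m"
    by (simp add: le_fun_def lookup_add)
  with \<open>t \<in> T\<close> show ?thesis by blast
qed

lemma mem_gen_ideal_monomials_iff:
  fixes f :: "('a::order, 'k::comm_ring_1) mpoly"
  assumes "finite T" and T: "\<And>t v. t \<in> T \<Longrightarrow> v \<in> Poly_Mapping.keys t \<Longrightarrow> fst v \<in> join_irreducibles"
  shows "f \<in> gen_ideal ring_S ((\<lambda>t. Poly_Mapping.single t 1) ` T) \<longleftrightarrow>
    f \<in> ring_S \<and> (\<forall>m\<in>Poly_Mapping.keys f. \<exists>t\<in>T. Poly_Mapping.lookup t \<le> Poly_Mapping.lookup m)"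
    (is "f \<in> gen_ideal ring_S ?G \<longleftrightarrow> _")
proof
  assume f: "f \<in> gen_ideal ring_S ?G"
  have "gen_ideal ring_S ?G \<subseteq> ring_S"
    using T by (intro gen_ideal_subset zero_mem_ring_S add_mem_ring_S mult_mem_ring_S)
      (auto intro: single_mem_ring_S)
  with f show "f \<in> ring_S \<and> (\<forall>m\<in>Poly_Mapping.keys f. \<exists>t\<in>T. Poly_Mapping.lookup t \<le> Poly_Mapping.lookup m)"
    using divisor_of_keys_gen_ideal_monomials by blast
next
  assume f: "f \<in> ring_S \<and> (\<forall>m\<in>Poly_Mapping.keys f. \<exists>t\<in>T. Poly_Mapping.lookup t \<le> Poly_Mapping.lookup m)"
  have "Poly_Mapping.single m (Poly_Mapping.lookup f m) \<in> gen_ideal ring_S ?G"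
    if m: "m \<in> Poly_Mapping.keys f" for m
  proof -
    obtain t where "t \<in> T" and t: "Poly_Mapping.lookup t \<le> Poly_Mapping.lookup m"
      using f m by blast
    have "Poly_Mapping.keys (m - t) \<subseteq> Poly_Mapping.keys m"
      by (auto simp: in_keys_iff lookup_minus)
    moreover have "\<forall>v\<in>Poly_Mapping.keys m. fst v \<in> join_irreducibles"
      using f m unfolding ring_S_def by blast
    ultimately have "Poly_Mapping.single (m - t) (Poly_Mapping.lookup f m) \<in> ring_S"
      by (intro single_mem_ring_S) blast
    with \<open>t \<in> T\<close> \<open>finite T\<close> show ?thesis
      unfolding single_eq_single_diff_mult[OF t]
      by (intro mult_mem_gen_ideal zero_mem_ring_S) auto
  qed
  then have "(\<Sum>m\<in>Poly_Mapping.keys f. Poly_Mapping.single m (Poly_Mapping.lookup f m)) \<in> gen_ideal ring_S ?G"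
    by (intro sum_closed zero_mem_gen_ideal zero_mem_ring_S add_mem_gen_ideal add_mem_ring_S)
  then show "f \<in> gen_ideal ring_S ?G"
    by (simp only: sum_single_lookup_keys)
qed

section \<open>The generators u_q\<close>

definition u_exp :: "'a::order \<Rightarrow> ('a \<times> bool) \<Rightarrow>\<^sub>0 nat" where
  "u_exp q = (\<Sum>p\<in>lower_set q. Poly_Mapping.single (p, True) 1) +
             (\<Sum>p\<in>join_irreducibles - lower_set q. Poly_Mapping.single (p, False) 1)"

lemma prod_var_eq_single:
  "finite A \<Longrightarrow> (\<Prod>p\<in>A. var (f p) :: ('a, 'k::comm_ring_1) mpoly) =
    Poly_Mapping.single (\<Sum>p\<in>A. Poly_Mapping.single (f p) 1) 1"
  by (induction A rule: finite_induct) (simp_all add: var_def mult_single add.commute)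

lemma u_mon_eq_single:
  "(u_mon q :: ('a::{finite,order}, 'k::comm_ring_1) mpoly) = Poly_Mapping.single (u_exp q) 1"
  unfolding u_mon_def u_exp_def by (simp add: prod_var_eq_single mult_single)

lemma lookup_u_exp:
  "Poly_Mapping.lookup (u_exp (q::'a::{finite,order})) (p, b) =
    (if p \<in> join_irreducibles \<and> b = (p \<le> q) then 1 else 0)"
  unfolding u_exp_def lower_set_def
  by (cases b) (auto simp: lookup_add lookup_sum lookup_single when_def)

lemma fst_keys_u_exp:
  "v \<in> Poly_Mapping.keys (u_exp (q::'a::{finite,order})) \<Longrightarrow> fst v \<in> join_irreducibles"
  by (cases v) (auto simp: in_keys_iff lookup_u_exp split: if_splits)

lemma mem_H_ideal_iff:
  "(f :: ('a::{finite,order}, 'k::comm_ring_1) mpoly) \<in> H_ideal A \<longleftrightarrow>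
    f \<in> ring_S \<and> (\<forall>m\<in>Poly_Mapping.keys f. \<exists>a\<in>A. Poly_Mapping.lookup (u_exp a) \<le> Poly_Mapping.lookup m)"
proof -
  have "u_mon ` A = (\<lambda>t. Poly_Mapping.single t (1::'k)) ` u_exp ` A"
    by (auto simp: u_mon_eq_single)
  then have "f \<in> H_ideal A \<longleftrightarrow> f \<in> gen_ideal ring_S ((\<lambda>t. Poly_Mapping.single t 1) ` u_exp ` A)"
    unfolding H_ideal_def by simp
  also have "\<dots> \<longleftrightarrow> f \<in> ring_S \<and>
      (\<forall>m\<in>Poly_Mapping.keys f. \<exists>t\<in>u_exp ` A. Poly_Mapping.lookup t \<le> Poly_Mapping.lookup m)"
    by (rule mem_gen_ideal_monomials_iff) (simp, blast intro: fst_keys_u_exp)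
  finally show ?thesis by blast
qed

lemma lookup_u_exp_le_max:
  fixes a b c :: "'a::{finite,distrib_lattice}"
  assumes "inf a b \<le> c" and "c \<le> sup a b"
  shows "Poly_Mapping.lookup (u_exp c) v \<le> max (Poly_Mapping.lookup (u_exp a) v) (Poly_Mapping.lookup (u_exp b) v)"
proof (cases v)
  case (Pair p bb)
  have "p \<le> a \<or> p \<le> b" if "p \<in> join_irreducibles" "p \<le> c"
    using join_irreducible_le_supD[OF that(1) order.trans[OF that(2) assms(2)]] .
  moreover have "\<not> p \<le> a \<or> \<not> p \<le> b" if "\<not> p \<le> c"
    using that assms(1) by (meson le_infI order.trans)
  ultimately show ?thesis
    unfolding Pair lookup_u_exp by (cases bb) auto
qed

lemma between_if_u_exp_le_add:
  fixes a b c :: "'a::{finite,lattice}"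
  assumes "Poly_Mapping.lookup (u_exp c) \<le> Poly_Mapping.lookup (u_exp a + u_exp b)"
  shows "inf a b \<le> c \<and> c \<le> sup a b"
proof -
  have le: "Poly_Mapping.lookup (u_exp c) (r, bb) \<le>
      Poly_Mapping.lookup (u_exp a) (r, bb) + Poly_Mapping.lookup (u_exp b) (r, bb)" for r bb
    using assms by (simp add: le_fun_def lookup_add)
  have "r \<le> sup a b" if "r \<in> join_irreducibles" "r \<le> c" for r
  proof -
    from le[of r True] that have "r \<le> a \<or> r \<le> b"
      by (auto simp: lookup_u_exp split: if_splits)
    then show ?thesis by (auto intro: le_supI1 le_supI2)
  qed
  moreover have "r \<le> c" if "r \<in> join_irreducibles" "r \<le> inf a b" for r
    using le[of r False] that by (auto simp: lookup_u_exp split: if_splits)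
  ultimately show ?thesis
    using le_if_join_irreducibles_le[of c "sup a b"] le_if_join_irreducibles_le[of "inf a b" c]
    by blast
qed

lemma u_exp_le_add_iff:
  fixes a b c :: "'a::{finite,distrib_lattice}"
  shows "Poly_Mapping.lookup (u_exp c) \<le> Poly_Mapping.lookup (u_exp a + u_exp b) \<longleftrightarrow>
    inf a b \<le> c \<and> c \<le> sup a b"
proof
  assume "inf a b \<le> c \<and> c \<le> sup a b"
  then have "Poly_Mapping.lookup (u_exp c) v \<le> Poly_Mapping.lookup (u_exp a + u_exp b) v" for v
    using lookup_u_exp_le_max[of a b c v] by (simp add: lookup_add)
  then show "Poly_Mapping.lookup (u_exp c) \<le> Poly_Mapping.lookup (u_exp a + u_exp b)"
    by (rule le_funI)
qed (rule between_if_u_exp_le_add)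

lemma u_mon_mult_mem_H_ideal_iff:
  "(u_mon a * u_mon b :: ('a::{finite,distrib_lattice}, 'k::comm_ring_1) mpoly) \<in> H_ideal A \<longleftrightarrow>
    (\<exists>c\<in>A. inf a b \<le> c \<and> c \<le> sup a b)"
proof -
  have "u_mon a * u_mon b = (Poly_Mapping.single (u_exp a + u_exp b) 1 :: ('a, 'k) mpoly)"
    by (simp add: u_mon_eq_single mult_single)
  moreover have "(Poly_Mapping.single (u_exp a + u_exp b) 1 :: ('a, 'k) mpoly) \<in> ring_S"
    using keys_add[of "u_exp a" "u_exp b"] by (intro single_mem_ring_S) (auto dest: fst_keys_u_exp)
  ultimately show ?thesis
    by (simp add: mem_H_ideal_iff u_exp_le_add_iff)
qed

lemma H_ideal_mono:
  assumes "A \<subseteq> B"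
  shows "(H_ideal A :: ('a::{finite,order}, 'k::comm_ring_1) mpoly set) \<subseteq> H_ideal B"
proof
  fix f :: "('a, 'k) mpoly"
  assume "f \<in> H_ideal A"
  with assms show "f \<in> H_ideal B" unfolding mem_H_ideal_iff by blast
qed

lemma H_ideal_Int_subset:
  fixes I J :: "'a::{finite,distrib_lattice} set"
  assumes "poset_ideal I" and "poset_coideal J"
    and cover: "\<And>p q. lower_neighbor q p \<Longrightarrow> p \<in> I \<or> q \<in> J"
  shows "H_ideal I \<inter> H_ideal J \<subseteq> (H_ideal (I \<inter> J) :: ('a, 'k::comm_ring_1) mpoly set)"
proof
  fix f :: "('a, 'k) mpoly"
  assume "f \<in> H_ideal I \<inter> H_ideal J"
  then have "f \<in> ring_S"
    and I: "\<forall>m\<in>Poly_Mapping.keys f. \<exists>a\<in>I. Poly_Mapping.lookup (u_exp a) \<le> Poly_Mapping.lookup m"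
    and J: "\<forall>m\<in>Poly_Mapping.keys f. \<exists>b\<in>J. Poly_Mapping.lookup (u_exp b) \<le> Poly_Mapping.lookup m"
    by (simp_all add: mem_H_ideal_iff)
  have "\<exists>c\<in>I \<inter> J. Poly_Mapping.lookup (u_exp c) \<le> Poly_Mapping.lookup m"
    if "m \<in> Poly_Mapping.keys f" for m
  proof -
    from I that obtain a where "a \<in> I" and a: "Poly_Mapping.lookup (u_exp a) \<le> Poly_Mapping.lookup m"
      by (elim bspec[elim_format] bexE)
    from J that obtain b where "b \<in> J" and b: "Poly_Mapping.lookup (u_exp b) \<le> Poly_Mapping.lookup m"
      by (elim bspec[elim_format] bexE)
    obtain c where "c \<in> I \<inter> J" and between: "inf a b \<le> c" "c \<le> sup a b"
      using ex_between_in_ideal_coideal[OF assms \<open>a \<in> I\<close> \<open>b \<in> J\<close>] .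
    have "Poly_Mapping.lookup (u_exp c) \<le> Poly_Mapping.lookup m"
    proof (rule le_funI)
      fix v
      show "Poly_Mapping.lookup (u_exp c) v \<le> Poly_Mapping.lookup m v"
        using order.trans[OF lookup_u_exp_le_max[OF between] max.boundedI[OF le_funD[OF a] le_funD[OF b]]] .
    qed
    with \<open>c \<in> I \<inter> J\<close> show ?thesis ..
  qed
  with \<open>f \<in> ring_S\<close> show "f \<in> H_ideal (I \<inter> J)"
    by (simp add: mem_H_ideal_iff)
qed

lemma cover_condition_if_H_ideal_Int_eq:
  fixes I J :: "'a::{finite,distrib_lattice} set"
  assumes "I \<union> J = UNIV"
    and eq: "H_ideal (I \<inter> J) = (H_ideal I \<inter> H_ideal J :: ('a, 'k::comm_ring_1) mpoly set)"
    and cover: "lower_neighbor q p"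
  shows "p \<in> I \<or> q \<in> J"
proof (rule ccontr)
  assume "\<not> (p \<in> I \<or> q \<in> J)"
  with assms(1) have "p \<in> J - I" "q \<in> I - J" by auto
  from cover have "q \<le> p" unfolding lower_neighbor_def by (simp add: less_imp_le)
  then have "inf p q = q" "sup p q = p" by (simp_all add: inf.absorb2 sup.absorb1)
  note u_mon_mult_mem_H_ideal_iff[of p q, unfolded this]
  then have "(u_mon p * u_mon q :: ('a, 'k) mpoly) \<in> H_ideal I \<inter> H_ideal J"
    using \<open>p \<in> J - I\<close> \<open>q \<in> I - J\<close> \<open>q \<le> p\<close> by blast
  then have "(u_mon p * u_mon q :: ('a, 'k) mpoly) \<in> H_ideal (I \<inter> J)"
    by (simp only: eq)
  then obtain c where "c \<in> I \<inter> J" "q \<le> c" "c \<le> p"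
    using \<open>inf p q = q\<close> \<open>sup p q = p\<close> by (auto simp: u_mon_mult_mem_H_ideal_iff)
  with cover \<open>p \<in> J - I\<close> \<open>q \<in> I - J\<close> show False
    unfolding lower_neighbor_def by (metis Diff_iff IntE order.not_eq_order_implies_strict)
qed

theorem theorem3p8:
  fixes I J :: "('a::{finite, distrib_lattice}) set"
  assumes "poset_ideal I" and "poset_coideal J" and "I \<union> J = UNIV"
  shows "(H_ideal (I \<inter> J) = (H_ideal I \<inter> H_ideal J :: ('a, 'k::field) mpoly set))
     \<longleftrightarrow> (\<forall>p q. lower_neighbor q p \<longrightarrow> p \<in> I \<or> q \<in> J)"
proof
  assume "H_ideal (I \<inter> J) = (H_ideal I \<inter> H_ideal J :: ('a, 'k) mpoly set)"
  then show "\<forall>p q. lower_neighbor q p \<longrightarrow> p \<in> I \<or> q \<in> J"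
    using cover_condition_if_H_ideal_Int_eq[OF assms(3)] by blast
next
  assume "\<forall>p q. lower_neighbor q p \<longrightarrow> p \<in> I \<or> q \<in> J"
  then have "H_ideal I \<inter> H_ideal J \<subseteq> (H_ideal (I \<inter> J) :: ('a, 'k) mpoly set)"
    by (intro H_ideal_Int_subset assms(1,2)) blast
  moreover have "H_ideal (I \<inter> J) \<subseteq> (H_ideal I \<inter> H_ideal J :: ('a, 'k) mpoly set)"
    by (simp add: H_ideal_mono)
  ultimately show "H_ideal (I \<inter> J) = (H_ideal I \<inter> H_ideal J :: ('a, 'k) mpoly set)"
    by (rule antisym[rotated])
qed

end
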